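(* Let $\pi:G\to\mathcal{U}(\mathcal{H}_\pi)$ be an integrable representation. Then $C_\pi(\mathcal{A})\subset\mathcal{D}(C_\pi)$.
   Context: $G$ is a $\sigma$-compact locally compact group; $\mathcal{W}_g f(x)=\langle f,\pi(x)g\rangle$. $\pi$ is integrable if irreducible unitary with some non-zero $g$ satisfying $\mathcal{W}_g g\in L^1(G)$; it is then square integrable. $\mathcal{A}=\{g\in\mathcal{H}_\pi:\mathcal{W}_g g\in L^1(G)\}$ (note $\mathcal{A}\subset\mathcal{D}(C_\pi)\cup\{0\}$ since $L^1\cap L^\infty\subset L^2$). $C_\pi:\mathcal{D}(C_\pi)\to\mathcal{H}_\pi$ is the Duflo–Moore operator: the unique self-adjoint positive densely defined injective operator such that the non-zero $g$ with $\mathcal{W}_g g\in L^2(G)$ are exactly the non-zero elements of $\mathcal{D}(C_\pi)$ and $\langle\mathcal{W}_{g_1}f_1,\mathcal{W}_{g_2}f_2\rangle_{L^2(G)}=\langle f_1,f_2\rangle\overline{\langle C_\pi g_1,C_\pi g_2\rangle}$ for $g_1,g_2\in\mathcal{D}(C_\pi)$, $f_1,f_2\in\mathcal{H}_\pi$. *)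

theory Defs
  imports "HOL-Analysis.Analysis"
begin

text \<open>A complex
Hilbert space is modelled as a real Hilbert space (real_inner + complete_space)
together with an operator J (multiplication by the imaginary unit): a real-linear
isometry with J (J x) = - x. The complex inner product (linear in the first
argument) is  <x,y> = x.y + i x.(J y).\<close>

definition complex_structure :: "('h::real_inner \<Rightarrow> 'h) \<Rightarrow> bool" where
  "complex_structure J \<longleftrightarrow> linear J \<and> (\<forall>x. J (J x) = - x) \<and> (\<forall>x. norm (J x) = norm x)"

definition cscale :: "('h::real_vector \<Rightarrow> 'h) \<Rightarrow> complex \<Rightarrow> 'h \<Rightarrow> 'h" where
  "cscale J c x = Re c *\<^sub>R x + Im c *\<^sub>R J x"

definition cinner :: "('h::real_inner \<Rightarrow> 'h) \<Rightarrow> 'h \<Rightarrow> 'h \<Rightarrow> complex" where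
  "cinner J x y = Complex (inner x y) (inner x (J y))"

definition csubspace :: "('h::real_vector \<Rightarrow> 'h) \<Rightarrow> 'h set \<Rightarrow> bool" where
  "csubspace J V \<longleftrightarrow> subspace V \<and> (\<forall>x\<in>V. J x \<in> V)"

definition clinear_op :: "('h::real_vector \<Rightarrow> 'h) \<Rightarrow> ('h \<Rightarrow> 'h) \<Rightarrow> bool" where
  "clinear_op J T \<longleftrightarrow> linear T \<and> (\<forall>x. T (J x) = J (T x))"

definition unitary_op :: "('h::real_inner \<Rightarrow> 'h) \<Rightarrow> ('h \<Rightarrow> 'h) \<Rightarrow> bool" where
  "unitary_op J U \<longleftrightarrow> clinear_op J U \<and> surj U \<and> (\<forall>x. norm (U x) = norm x)"

text \<open>A (not necessarily abelian) Hausdorff topological group written additively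
(class group_add is non-commutative).\<close>

definition locally_compact_sigma_compact_group :: "'g::{topological_group_add,t2_space} itself \<Rightarrow> bool" where
  "locally_compact_sigma_compact_group _ \<longleftrightarrow>
     (\<forall>x::'g. \<exists>U K. open U \<and> compact K \<and> x \<in> U \<and> U \<subseteq> K) \<and>
     (\<exists>K::nat \<Rightarrow> 'g set. (\<forall>n. compact (K n)) \<and> (\<Union>n. K n) = UNIV)"

definition left_haar_measure :: "'g::{topological_group_add,t2_space} measure \<Rightarrow> bool" where
  "left_haar_measure \<mu> \<longleftrightarrow>
     sets \<mu> = sets borel \<and>
     (\<forall>x A. A \<in> sets borel \<longrightarrow> emeasure \<mu> ((\<lambda>y. x + y) ` A) = emeasure \<mu> A) \<and>
     (\<forall>K. compact K \<longrightarrow> emeasure \<mu> K < \<infinity>) \<and>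
     (\<forall>U. open U \<and> U \<noteq> {} \<longrightarrow> emeasure \<mu> U > 0) \<and>
     (\<forall>A\<in>sets borel. emeasure \<mu> A = (INF U\<in>{U. open U \<and> A \<subseteq> U}. emeasure \<mu> U)) \<and>
     (\<forall>U. open U \<longrightarrow> emeasure \<mu> U = (SUP K\<in>{K. compact K \<and> K \<subseteq> U}. emeasure \<mu> K))"

definition unitary_rep :: "('h::real_inner \<Rightarrow> 'h) \<Rightarrow> ('g::topological_group_add \<Rightarrow> 'h \<Rightarrow> 'h) \<Rightarrow> bool" where
  "unitary_rep J \<pi> \<longleftrightarrow>
     (\<forall>x. unitary_op J (\<pi> x)) \<and> \<pi> 0 = id \<and> (\<forall>x y. \<pi> (x + y) = \<pi> x \<circ> \<pi> y) \<and>
     (\<forall>f. continuous_on UNIV (\<lambda>x. \<pi> x f))"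

definition irreducible_rep :: "('h::real_inner \<Rightarrow> 'h) \<Rightarrow> ('g::topological_group_add \<Rightarrow> 'h \<Rightarrow> 'h) \<Rightarrow> bool" where
  "irreducible_rep J \<pi> \<longleftrightarrow> unitary_rep J \<pi> \<and> (UNIV::'h set) \<noteq> {0} \<and>
     (\<forall>V. csubspace J V \<and> closed V \<and> (\<forall>x. \<pi> x ` V \<subseteq> V) \<longrightarrow> V = {0} \<or> V = UNIV)"

definition voice :: "('h::real_inner \<Rightarrow> 'h) \<Rightarrow> ('g \<Rightarrow> 'h \<Rightarrow> 'h) \<Rightarrow> 'h \<Rightarrow> 'h \<Rightarrow> 'g \<Rightarrow> complex" where
  "voice J \<pi> g f x = cinner J f (\<pi> x g)"

definition square_integrable :: "'g measure \<Rightarrow> ('g \<Rightarrow> complex) \<Rightarrow> bool" where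
  "square_integrable \<mu> F \<longleftrightarrow> F \<in> borel_measurable \<mu> \<and> integrable \<mu> (\<lambda>x. (cmod (F x))\<^sup>2)"

definition integrable_rep :: "'g::{topological_group_add,t2_space} measure \<Rightarrow> ('h::real_inner \<Rightarrow> 'h) \<Rightarrow> ('g \<Rightarrow> 'h \<Rightarrow> 'h) \<Rightarrow> bool" where
  "integrable_rep \<mu> J \<pi> \<longleftrightarrow> irreducible_rep J \<pi> \<and>
     (\<exists>g. g \<noteq> 0 \<and> integrable \<mu> (voice J \<pi> g g))"

definition A_set :: "'g measure \<Rightarrow> ('h::real_inner \<Rightarrow> 'h) \<Rightarrow> ('g \<Rightarrow> 'h \<Rightarrow> 'h) \<Rightarrow> 'h set" where
  "A_set \<mu> J \<pi> = {g. integrable \<mu> (voice J \<pi> g g)}"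

text \<open>Such C is unique,
so assuming these properties identifies C_pi.\<close>

definition duflo_moore :: "'g::{topological_group_add,t2_space} measure \<Rightarrow> ('h::{real_inner,complete_space} \<Rightarrow> 'h) \<Rightarrow>
    ('g \<Rightarrow> 'h \<Rightarrow> 'h) \<Rightarrow> ('h \<Rightarrow> 'h) \<Rightarrow> 'h set \<Rightarrow> bool" where
  "duflo_moore \<mu> J \<pi> C D \<longleftrightarrow>
     csubspace J D \<and> closure D = UNIV \<and>
     (\<forall>x\<in>D. \<forall>y\<in>D. C (x + y) = C x + C y) \<and>
     (\<forall>x\<in>D. \<forall>c. C (cscale J c x) = cscale J c (C x)) \<and>
     (\<forall>y. (\<exists>z. \<forall>x\<in>D. cinner J (C x) y = cinner J x z) \<longleftrightarrow> y \<in> D) \<and>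
     (\<forall>x\<in>D. \<forall>y\<in>D. cinner J (C x) y = cinner J x (C y)) \<and>
     (\<forall>x\<in>D. Re (cinner J (C x) x) \<ge> 0) \<and>
     inj_on C D \<and>
     (\<forall>g. g \<noteq> 0 \<longrightarrow> (square_integrable \<mu> (voice J \<pi> g g) \<longleftrightarrow> g \<in> D)) \<and>
     (\<forall>g1\<in>D. \<forall>g2\<in>D. \<forall>f1 f2.
        square_integrable \<mu> (voice J \<pi> g1 f1) \<and>
        (LINT x|\<mu>. voice J \<pi> g1 f1 x * cnj (voice J \<pi> g2 f2 x))
          = cinner J f1 f2 * cnj (cinner J (C g1) (C g2)))"

end

theory Submission
  imports Defs
begin

(* If W_g g is integrable then it is also bounded (by |g|^2), hence square integrable, so g
   lies in D(C_pi).  For x in D(C_pi) the orthogonality relations give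
     |g|^2 <C_pi x, C_pi g> = integral of <x, pi(y)^-1 g> W_g g(y) dy,
   and the right-hand side is a bounded functional of x, with norm at most |g| |W_g g|_1.
   By the Riesz representation theorem x |-> <C_pi x, C_pi g> is then of the form <x, z>,
   i.e. C_pi g is in the domain of the adjoint of C_pi, which is D(C_pi) by self-adjointness.
   The Riesz representation theorem itself comes from minimising |x|^2/2 - L x, the
   minimising sequences being Cauchy by the parallelogram law. *)

definition quadratic_energy :: "('h::real_normed_vector \<Rightarrow> real) \<Rightarrow> 'h \<Rightarrow> real" where
  "quadratic_energy L x = (norm x)\<^sup>2 / 2 - L x"

lemma quadratic_energy_lower_bound:
  assumes "\<And>x. L x \<le> norm x * K"
  shows "- K\<^sup>2 / 2 \<le> quadratic_energy L x"
proof -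
  have "0 \<le> (norm x - K)\<^sup>2" by simp
  then show ?thesis
    using assms[of x] unfolding quadratic_energy_def by (simp add: power2_eq_square algebra_simps)
qed

lemma quadratic_energy_parallelogram:
  fixes L :: "'h::real_inner \<Rightarrow> real"
  assumes "linear L"
  shows "(norm (x - y))\<^sup>2 =
    4 * (quadratic_energy L x + quadratic_energy L y - 2 * quadratic_energy L ((1/2) *\<^sub>R (x + y)))"
proof -
  have "(norm ((1/2) *\<^sub>R (x + y)))\<^sup>2 = (norm (x + y))\<^sup>2 / 4"
    by (simp add: power_divide)
  moreover have "L ((1/2) *\<^sub>R (x + y)) = (L x + L y) / 2"
    by (simp add: linear_add[OF assms] linear_scale[OF assms])
  ultimately show ?thesis
    unfolding quadratic_energy_def
    by (simp add: power2_norm_eq_inner inner_add inner_diff inner_commute field_simps)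
qed

lemma quadratic_energy_has_minimiser:
  fixes L :: "'h::{real_inner,complete_space} \<Rightarrow> real"
  assumes "bounded_linear L"
  obtains z where "\<And>x. quadratic_energy L z \<le> quadratic_energy L x"
proof -
  let ?E = "quadratic_energy L"
  interpret L: bounded_linear L by fact
  obtain K where "\<And>x. norm (L x) \<le> norm x * K" using L.bounded by blast
  then have "\<And>x. L x \<le> norm x * K" by (metis abs_le_D1 real_norm_def)
  then have "bdd_below (range ?E)"
    using quadratic_energy_lower_bound by (intro bdd_belowI[of _ "- K\<^sup>2 / 2"]) blast
  define m where "m = Inf (range ?E)"
  have m_le: "m \<le> ?E x" for x
    unfolding m_def by (rule cInf_lower) (use \<open>bdd_below (range ?E)\<close> in auto)
  have "\<exists>x. ?E x < m + 1 / Suc n" for n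
    using cInf_lessD[of "range ?E" "m + 1 / Suc n"] by (auto simp: m_def)
  then obtain xs where xs: "\<And>n. ?E (xs n) < m + 1 / Suc n" by metis
  have dist_xs: "(norm (xs n - xs k))\<^sup>2 < 4 * (1 / Suc n + 1 / Suc k)" for n k
    using quadratic_energy_parallelogram[OF L.linear, of "xs n" "xs k"] xs[of n] xs[of k]
      m_le[of "(1/2) *\<^sub>R (xs n + xs k)"]
    by argo
  have "Cauchy xs"
  proof (rule CauchyI)
    fix e :: real assume e: "0 < e"
    obtain N :: nat where "8 / e\<^sup>2 < real N" using reals_Archimedean2 by blast
    then have N: "8 / real (Suc N) < e\<^sup>2"
      using e by (simp add: field_simps) (insert zero_less_power[OF e, of 2], linarith)
    show "\<exists>M. \<forall>m\<ge>M. \<forall>n\<ge>M. norm (xs m - xs n) < e"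
    proof (intro exI allI impI)
      fix a b assume "N \<le> a" "N \<le> b"
      then have "1 / real (Suc a) \<le> 1 / Suc N" "1 / real (Suc b) \<le> 1 / Suc N"
        by (simp_all add: frac_le)
      then have "(norm (xs a - xs b))\<^sup>2 < e\<^sup>2" using dist_xs[of a b] N by simp
      then show "norm (xs a - xs b) < e" using e by (simp add: power_less_imp_less_base)
    qed
  qed
  then obtain z where z: "xs \<longlonglongrightarrow> z" using Cauchy_convergent convergent_def by blast
  have "(\<lambda>n. ?E (xs n)) \<longlonglongrightarrow> ?E z"
    unfolding quadratic_energy_def by (intro tendsto_intros L.tendsto z) simp
  moreover have "(\<lambda>n. m + 1 / Suc n) \<longlonglongrightarrow> m"
    using tendsto_add[OF tendsto_const LIMSEQ_inverse_real_of_nat, of m]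
    by (simp add: inverse_eq_divide)
  ultimately have "?E z \<le> m" using xs by (intro LIMSEQ_le) (auto intro: less_imp_le)
  then show ?thesis using m_le that by (meson order_trans)
qed

lemma quadratic_energy_minimiser_represents:
  fixes L :: "'h::real_inner \<Rightarrow> real"
  assumes "linear L" and min: "\<And>x. quadratic_energy L z \<le> quadratic_energy L x"
  shows "L v = inner v z"
proof (rule ccontr)
  assume "L v \<noteq> inner v z"
  define a where "a = inner z v - L v"
  define b where "b = (norm v)\<^sup>2 / 2"
  have "a \<noteq> 0" using \<open>L v \<noteq> inner v z\<close> by (simp add: a_def inner_commute)
  have "b \<ge> 0" by (simp add: b_def)
  have variation: "quadratic_energy L (z + t *\<^sub>R v) - quadratic_energy L z = t * a + t\<^sup>2 * b" for t
  proof -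
    have "(norm (z + t *\<^sub>R v))\<^sup>2 = (norm z)\<^sup>2 + 2 * t * inner z v + t\<^sup>2 * (norm v)\<^sup>2"
      unfolding power2_norm_eq_inner
      by (simp add: inner_commute algebra_simps power2_eq_square)
    then show ?thesis
      unfolding quadratic_energy_def a_def b_def linear_add[OF assms(1)] linear_scale[OF assms(1)]
      by (simp add: field_simps)
  qed
  define s where "s = 1 / (b + 1)"
  have "s > 0" "s * b < 1" using \<open>b \<ge> 0\<close> by (simp_all add: s_def field_simps)
  have "- (a * s) * a + (- (a * s))\<^sup>2 * b = (s * a\<^sup>2) * (s * b - 1)"
    by (simp add: algebra_simps power2_eq_square)
  also have "\<dots> < 0" using \<open>a \<noteq> 0\<close> \<open>s > 0\<close> \<open>s * b < 1\<close> by (intro mult_pos_neg) auto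
  finally show False using variation[of "- (a * s)"] min[of "z + (- (a * s)) *\<^sub>R v"] by linarith
qed

lemma riesz_representation_real:
  fixes L :: "'h::{real_inner,complete_space} \<Rightarrow> real"
  assumes "bounded_linear L"
  obtains z where "\<And>x. L x = inner x z"
  using quadratic_energy_has_minimiser[OF assms] quadratic_energy_minimiser_represents
    bounded_linear.linear[OF assms] by metis

lemma
  assumes "complex_structure J"
  shows complex_structure_linear: "linear J"
    and complex_structure_twice: "J (J x) = - x"
    and norm_complex_structure: "norm (J x) = norm x"
  using assms by (auto simp: complex_structure_def)

lemma bounded_linear_complex_structure: "complex_structure J \<Longrightarrow> bounded_linear J"
  by (rule bounded_linear_intro[of J 1])
    (auto simp: linear_add linear_scale complex_structure_linear norm_complex_structure)

lemma inner_complex_structure: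
  assumes "complex_structure J"
  shows "inner (J x) (J y) = inner x y"
proof -
  have "orthogonal_transformation J"
    using assms by (simp add: orthogonal_transformation complex_structure_def)
  then show ?thesis by (simp add: orthogonal_transformation_def)
qed

lemma inner_complex_structure_left:
  assumes "complex_structure J"
  shows "inner (J x) y = - inner x (J y)"
  using inner_complex_structure[OF assms, of "J x" y] by (simp add: complex_structure_twice[OF assms])

lemma inner_complex_structure_self: "complex_structure J \<Longrightarrow> inner x (J x) = 0"
  using inner_complex_structure_left[of J x x] by (simp add: inner_commute)

lemma cinner_add_left: "cinner J (x + y) v = cinner J x v + cinner J y v"
  by (simp add: cinner_def inner_add_left complex_eq_iff)

lemma cinner_scaleR_left: "cinner J (r *\<^sub>R x) v = of_real r * cinner J x v"
  by (simp add: cinner_def complex_eq_iff)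

lemma cinner_scaleR_right:
  "complex_structure J \<Longrightarrow> cinner J x (r *\<^sub>R v) = of_real r * cinner J x v"
  by (simp add: cinner_def complex_eq_iff linear_scale complex_structure_linear)

lemma cinner_complex_structure_left:
  "complex_structure J \<Longrightarrow> cinner J (J x) v = \<i> * cinner J x v"
  by (simp add: cinner_def complex_eq_iff inner_complex_structure inner_complex_structure_left
      complex_structure_twice)

lemma cnj_cinner: "complex_structure J \<Longrightarrow> cnj (cinner J x y) = cinner J y x"
  using inner_complex_structure_left[of J y x]
  by (simp add: cinner_def complex_eq_iff inner_commute)

lemma cinner_self: "complex_structure J \<Longrightarrow> cinner J x x = of_real ((norm x)\<^sup>2)"
  by (simp add: cinner_def complex_eq_iff inner_complex_structure_self power2_norm_eq_inner)

lemma continuous_on_cinner_right: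
  assumes "complex_structure J" "continuous_on S v"
  shows "continuous_on S (\<lambda>y. cinner J x (v y))"
  unfolding cinner_def
  by (intro continuous_intros assms(2)
      linear_continuous_on[OF bounded_linear_complex_structure[OF assms(1)], THEN continuous_on_compose2])
    auto

lemma norm_cinner_le:
  assumes "complex_structure J"
  shows "cmod (cinner J x v) \<le> norm x * norm v"
proof -
  define a where "a = inner x v"
  define b where "b = inner x (J v)"
  define w where "w = a *\<^sub>R v + b *\<^sub>R J v"
  define S where "S = a\<^sup>2 + b\<^sup>2"
  have "S \<ge> 0" by (simp add: S_def)
  have "(norm w)\<^sup>2 = S * (norm v)\<^sup>2"
    unfolding power2_norm_eq_inner S_def w_def
    using inner_complex_structure[OF assms, of v v] inner_complex_structure_self[OF assms, of v]
    by (simp add: inner_commute algebra_simps power2_eq_square)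
  then have norm_w: "norm w = sqrt S * norm v"
    by (metis norm_ge_zero real_sqrt_mult real_sqrt_unique)
  have "sqrt S * sqrt S = inner x w"
    using \<open>S \<ge> 0\<close> by (simp add: S_def a_def b_def w_def inner_add_right power2_eq_square)
  also have "\<dots> \<le> sqrt S * (norm x * norm v)"
    using norm_cauchy_schwarz[of x w] by (simp add: norm_w algebra_simps)
  finally have "sqrt S \<le> norm x * norm v"
    using real_sqrt_ge_zero[OF \<open>S \<ge> 0\<close>]
    by (cases "sqrt S = 0") (auto simp: mult_le_cancel_left simp del: real_sqrt_mult_self)
  moreover have "cmod (cinner J x v) = sqrt S"
    by (simp add: cinner_def cmod_def S_def a_def b_def)
  ultimately show ?thesis by simp
qed

lemma cinner_representation:
  fixes \<Phi> :: "'h::{real_inner,complete_space} \<Rightarrow> complex"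
  assumes "complex_structure J" "bounded_linear \<Phi>" "\<And>x. \<Phi> (J x) = \<i> * \<Phi> x"
  obtains z where "\<And>x. \<Phi> x = cinner J x z"
proof -
  obtain z where z: "\<And>x. Re (\<Phi> x) = inner x z"
    using riesz_representation_real bounded_linear_compose[OF bounded_linear_Re assms(2)] by blast
  have "\<Phi> x = cinner J x z" for x
  proof (rule complex_eqI)
    show "Re (\<Phi> x) = Re (cinner J x z)" by (simp add: z cinner_def)
    have "Im (\<Phi> x) = - Re (\<Phi> (J x))" by (simp add: assms(3))
    then show "Im (\<Phi> x) = Im (cinner J x z)"
      by (simp add: z cinner_def inner_complex_structure_left[OF assms(1)])
  qed
  then show ?thesis by (rule that)
qed

lemma
  assumes "unitary_rep J \<pi>"
  shows unitary_rep_linear: "linear (\<pi> y)"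
    and norm_unitary_rep: "norm (\<pi> y x) = norm x"
    and unitary_rep_complex_structure: "\<pi> y (J x) = J (\<pi> y x)"
    and unitary_rep_continuous: "continuous_on UNIV (\<lambda>y. \<pi> y x)"
  using assms by (auto simp: unitary_rep_def unitary_op_def clinear_op_def)

lemma unitary_rep_minus: "unitary_rep J \<pi> \<Longrightarrow> \<pi> y (\<pi> (- y) v) = v"
  unfolding unitary_rep_def by (metis comp_apply right_minus id_apply)

lemma cinner_unitary_rep:
  assumes "unitary_rep J \<pi>"
  shows "cinner J (\<pi> y a) (\<pi> y b) = cinner J a b"
proof -
  have "orthogonal_transformation (\<pi> y)"
    using assms by (simp add: orthogonal_transformation unitary_rep_linear norm_unitary_rep)
  then show ?thesis
    by (simp add: cinner_def orthogonal_transformation_def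
        flip: unitary_rep_complex_structure[OF assms])
qed

lemma norm_voice_le:
  assumes "complex_structure J" "unitary_rep J \<pi>"
  shows "cmod (voice J \<pi> g f y) \<le> norm f * norm g"
  using norm_cinner_le[OF assms(1), of f "\<pi> y g"] by (simp add: voice_def norm_unitary_rep[OF assms(2)])

lemma square_integrable_if_bounded_integrable:
  fixes F :: "'a \<Rightarrow> complex"
  assumes "integrable \<mu> F" and bound: "\<And>y. cmod (F y) \<le> B"
  shows "square_integrable \<mu> F"
proof -
  have "integrable \<mu> (\<lambda>y. (cmod (F y))\<^sup>2)"
  proof (rule Bochner_Integration.integrable_bound)
    show "integrable \<mu> (\<lambda>y. B * cmod (F y))"
      using assms(1) by (intro integrable_mult_right integrable_norm)
    show "(\<lambda>y. (cmod (F y))\<^sup>2) \<in> borel_measurable \<mu>"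
      using borel_measurable_integrable[OF assms(1)] by measurable
    have "(cmod (F y))\<^sup>2 \<le> B * cmod (F y)" for y
      using bound[of y] by (simp add: power2_eq_square mult_right_mono)
    then show "AE y in \<mu>. norm ((cmod (F y))\<^sup>2) \<le> norm (B * cmod (F y))"
      by (intro AE_I2) (simp add: order_trans[OF _ abs_ge_self])
  qed
  then show ?thesis
    using borel_measurable_integrable[OF assms(1)] by (simp add: square_integrable_def)
qed

lemma
  assumes "duflo_moore \<mu> J \<pi> C D"
  shows duflo_moore_zero_mem: "0 \<in> D"
    and duflo_moore_zero: "C 0 = 0"
    and duflo_moore_adjoint_domainI: "(\<And>x. x \<in> D \<Longrightarrow> cinner J (C x) y = cinner J x z) \<Longrightarrow> y \<in> D"
    and duflo_moore_square_integrable_mem: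
      "g \<noteq> 0 \<Longrightarrow> square_integrable \<mu> (voice J \<pi> g g) \<Longrightarrow> g \<in> D"
    and duflo_moore_orthogonality: "g1 \<in> D \<Longrightarrow> g2 \<in> D \<Longrightarrow>
      (LINT x|\<mu>. voice J \<pi> g1 f1 x * cnj (voice J \<pi> g2 f2 x))
        = cinner J f1 f2 * cnj (cinner J (C g1) (C g2))"
proof -
  show "0 \<in> D"
    using assms by (simp add: duflo_moore_def csubspace_def subspace_0)
  moreover have "\<forall>x\<in>D. \<forall>y\<in>D. C (x + y) = C x + C y"
    using assms by (simp add: duflo_moore_def)
  ultimately have "C (0 + 0) = C 0 + C 0" by blast
  then show "C 0 = 0" by simp
  show "(\<And>x. x \<in> D \<Longrightarrow> cinner J (C x) y = cinner J x z) \<Longrightarrow> y \<in> D"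
  proof -
    have "(\<exists>z. \<forall>x\<in>D. cinner J (C x) y = cinner J x z) \<longleftrightarrow> y \<in> D"
      using assms by (simp add: duflo_moore_def)
    then show "(\<And>x. x \<in> D \<Longrightarrow> cinner J (C x) y = cinner J x z) \<Longrightarrow> y \<in> D" by blast
  qed
  show "g \<noteq> 0 \<Longrightarrow> square_integrable \<mu> (voice J \<pi> g g) \<Longrightarrow> g \<in> D"
    using assms by (simp add: duflo_moore_def)
  show "g1 \<in> D \<Longrightarrow> g2 \<in> D \<Longrightarrow>
      (LINT x|\<mu>. voice J \<pi> g1 f1 x * cnj (voice J \<pi> g2 f2 x))
        = cinner J f1 f2 * cnj (cinner J (C g1) (C g2))"
    using assms by (simp add: duflo_moore_def)
qed

definition voice_pairing ::
    "'g measure \<Rightarrow> ('h::real_inner \<Rightarrow> 'h) \<Rightarrow> ('g::group_add \<Rightarrow> 'h \<Rightarrow> 'h) \<Rightarrow> 'h \<Rightarrow> 'h \<Rightarrow> complex" where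
  "voice_pairing \<mu> J \<pi> g x = (LINT y|\<mu>. cinner J x (\<pi> (- y) g) * voice J \<pi> g g y)"

context
  fixes \<mu> :: "'g::{topological_group_add,t2_space} measure"
    and J :: "'h::{real_inner,complete_space} \<Rightarrow> 'h"
    and \<pi> :: "'g \<Rightarrow> 'h \<Rightarrow> 'h"
  assumes borel: "sets \<mu> = sets borel"
    and J: "complex_structure J"
    and \<pi>: "unitary_rep J \<pi>"
begin

lemma integrable_voice_pairing:
  assumes "integrable \<mu> (voice J \<pi> g g)"
  shows "integrable \<mu> (\<lambda>y. cinner J x (\<pi> (- y) g) * voice J \<pi> g g y)"
proof (rule Bochner_Integration.integrable_bound)
  show "integrable \<mu> (\<lambda>y. (norm x * norm g) * cmod (voice J \<pi> g g y))"
    using assms by (intro integrable_mult_right integrable_norm)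
  have "continuous_on UNIV (\<lambda>y. cinner J x (\<pi> (- y) g))"
    by (intro continuous_on_cinner_right[OF J] continuous_on_compose2[OF unitary_rep_continuous[OF \<pi>]]
        continuous_intros) auto
  then have "(\<lambda>y. cinner J x (\<pi> (- y) g)) \<in> borel_measurable \<mu>"
    using borel_measurable_continuous_onI measurable_cong_sets[OF borel refl] by blast
  then show "(\<lambda>y. cinner J x (\<pi> (- y) g) * voice J \<pi> g g y) \<in> borel_measurable \<mu>"
    using borel_measurable_integrable[OF assms] by measurable
  show "AE y in \<mu>. norm (cinner J x (\<pi> (- y) g) * voice J \<pi> g g y)
      \<le> norm ((norm x * norm g) * cmod (voice J \<pi> g g y))"
    using norm_cinner_le[OF J, of x "\<pi> (- y) g" for y]
    by (auto simp: norm_mult norm_unitary_rep[OF \<pi>] intro!: mult_right_mono)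
qed

lemma voice_pairing_representable:
  assumes "integrable \<mu> (voice J \<pi> g g)"
  obtains z where "\<And>x. voice_pairing \<mu> J \<pi> g x = cinner J x z"
proof (rule cinner_representation[OF J _ _ that])
  note integrable = integrable_voice_pairing[OF assms]
  show "bounded_linear (voice_pairing \<mu> J \<pi> g)"
  proof (rule bounded_linear_intro)
    show "voice_pairing \<mu> J \<pi> g (x + y) = voice_pairing \<mu> J \<pi> g x + voice_pairing \<mu> J \<pi> g y" for x y
      unfolding voice_pairing_def cinner_add_left distrib_right
      by (rule Bochner_Integration.integral_add[OF integrable integrable])
    show "voice_pairing \<mu> J \<pi> g (r *\<^sub>R x) = r *\<^sub>R voice_pairing \<mu> J \<pi> g x" for r x
      unfolding voice_pairing_def cinner_scaleR_left mult.assoc scaleR_conv_of_real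
      by (rule integral_mult_right_zero)
    show "norm (voice_pairing \<mu> J \<pi> g x) \<le> norm x * (norm g * (LINT y|\<mu>. cmod (voice J \<pi> g g y)))"
      for x
    proof -
      have "norm (voice_pairing \<mu> J \<pi> g x)
          \<le> (LINT y|\<mu>. norm (cinner J x (\<pi> (- y) g) * voice J \<pi> g g y))"
        unfolding voice_pairing_def by (rule integral_norm_bound)
      also have "\<dots> \<le> (LINT y|\<mu>. (norm x * norm g) * cmod (voice J \<pi> g g y))"
      proof (rule integral_mono)
        show "integrable \<mu> (\<lambda>y. norm (cinner J x (\<pi> (- y) g) * voice J \<pi> g g y))"
          using integrable by (rule integrable_norm)
        show "integrable \<mu> (\<lambda>y. (norm x * norm g) * cmod (voice J \<pi> g g y))"
          using assms by (intro integrable_mult_right integrable_norm)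
        show "norm (cinner J x (\<pi> (- y) g) * voice J \<pi> g g y)
            \<le> (norm x * norm g) * cmod (voice J \<pi> g g y)" for y
          using norm_cinner_le[OF J, of x "\<pi> (- y) g"]
          by (auto simp: norm_mult norm_unitary_rep[OF \<pi>] intro!: mult_right_mono)
      qed
      finally show ?thesis by simp
    qed
  qed
  show "voice_pairing \<mu> J \<pi> g (J x) = \<i> * voice_pairing \<mu> J \<pi> g x" for x
    unfolding voice_pairing_def cinner_complex_structure_left[OF J] mult.assoc
    by (rule integral_mult_right_zero)
qed

lemma duflo_moore_voice_pairing:
  assumes "duflo_moore \<mu> J \<pi> C D" "x \<in> D" "g \<in> D"
  shows "voice_pairing \<mu> J \<pi> g x = of_real ((norm g)\<^sup>2) * cinner J (C x) (C g)"
proof -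
  have "cnj (voice J \<pi> x g y) = cinner J x (\<pi> (- y) g)" for y
    using cinner_unitary_rep[OF \<pi>, of y x "\<pi> (- y) g"]
    by (simp add: voice_def cnj_cinner[OF J] unitary_rep_minus[OF \<pi>])
  then have "voice_pairing \<mu> J \<pi> g x = cnj (LINT y|\<mu>. voice J \<pi> x g y * cnj (voice J \<pi> g g y))"
    by (simp add: voice_pairing_def flip: Bochner_Integration.integral_cnj)
  also have "\<dots> = of_real ((norm g)\<^sup>2) * cinner J (C x) (C g)"
    by (simp add: duflo_moore_orthogonality[OF assms] cinner_self[OF J])
  finally show ?thesis .
qed

end

theorem mainTheorem11:
  fixes \<mu> :: "'g::{topological_group_add,t2_space} measure"
    and J :: "'h::{real_inner,complete_space} \<Rightarrow> 'h"
    and \<pi> :: "'g \<Rightarrow> 'h \<Rightarrow> 'h"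
    and C :: "'h \<Rightarrow> 'h" and D :: "'h set"
  assumes "locally_compact_sigma_compact_group TYPE('g)"
    and "left_haar_measure \<mu>"
    and "complex_structure J"
    and "integrable_rep \<mu> J \<pi>"
    and "duflo_moore \<mu> J \<pi> C D"
  shows "C ` A_set \<mu> J \<pi> \<subseteq> D"
proof
  fix h assume "h \<in> C ` A_set \<mu> J \<pi>"
  then obtain g where g: "integrable \<mu> (voice J \<pi> g g)" and h: "h = C g"
    by (auto simp: A_set_def)
  have borel: "sets \<mu> = sets borel" using assms(2) by (simp add: left_haar_measure_def)
  have \<pi>: "unitary_rep J \<pi>" using assms(4) by (simp add: integrable_rep_def irreducible_rep_def)
  show "h \<in> D"
  proof (cases "g = 0")
    case True
    then show ?thesis using h duflo_moore_zero_mem[OF assms(5)] duflo_moore_zero[OF assms(5)] by simp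
  next
    case False
    have "g \<in> D"
      using g norm_voice_le[OF assms(3) \<pi>, of g g] False
      by (intro duflo_moore_square_integrable_mem[OF assms(5)] square_integrable_if_bounded_integrable)
    obtain z where z: "\<And>x. voice_pairing \<mu> J \<pi> g x = cinner J x z"
      using voice_pairing_representable[OF borel assms(3) \<pi> g] by blast
    have "cinner J (C x) (C g) = cinner J x ((1 / (norm g)\<^sup>2) *\<^sub>R z)" if "x \<in> D" for x
      using duflo_moore_voice_pairing[OF borel assms(3) \<pi> assms(5) that \<open>g \<in> D\<close>] z[of x] False
      by (simp add: cinner_scaleR_right[OF assms(3)] field_simps)
    then show ?thesis
      using h duflo_moore_adjoint_domainI[OF assms(5)] by blast
  qed
qed

end
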